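(* Let $f(z)=z+\sum_{n=2}^\infty a_nz^n$ belong to the class $\mathcal{S}_G^{\ast}$, and let $\beta_n$ be its logarithmic coefficients. Then $$|\beta_n|\le\frac{1}{4n}\quad(n=1,2,3,4),$$ and these bounds are sharp.
   Context: Let $\mathcal{U}=\{z\in\mathbb{C}:|z|<1\}$. Let $\mathcal{S}$ denote the class of functions $f$ analytic and univalent in $\mathcal{U}$ normalized by $f(0)=0$, $f'(0)=1$. For analytic $g,h$ on $\mathcal{U}$, $g\prec h$ means there is an analytic $w$ on $\mathcal{U}$ with $w(0)=0$, $|w(z)|<1$, and $g(z)=h(w(z))$. Let $\Psi(z)=\frac{z}{\ln(1+z)}$ on $\mathcal{U}$ (principal branch, $\Psi(0)=1$). Define $\mathcal{S}_G^{\ast}=\{f\in\mathcal{S}: zf'(z)/f(z)\prec\Psi(z)\}$. The logarithmic coefficients $\beta_n$ of $f\in\mathcal{S}$ are defined by $\log\frac{f(z)}{z}=2\sum_{n=1}^\infty\beta_nz^n$ for $z\in\mathcal{U}$ (branch with value $0$ at $z=0$). "Sharp" means each bound is attained by some function in $\mathcal{S}_G^{\ast}$. *)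

theory Defs
  imports "HOL-Complex_Analysis.Complex_Analysis"
begin

definition class_S :: "(complex \<Rightarrow> complex) \<Rightarrow> bool" where
  "class_S f \<longleftrightarrow> f holomorphic_on ball 0 1 \<and> inj_on f (ball 0 1) \<and> f 0 = 0 \<and> deriv f 0 = 1"

definition subordinate :: "(complex \<Rightarrow> complex) \<Rightarrow> (complex \<Rightarrow> complex) \<Rightarrow> bool" where
  "subordinate g h \<longleftrightarrow> (\<exists>w. w holomorphic_on ball 0 1 \<and> w 0 = 0 \<and>
       (\<forall>z\<in>ball 0 1. norm (w z) < 1 \<and> g z = h (w z)))"

definition Psi :: "complex \<Rightarrow> complex" where
  "Psi z = (if z = 0 then 1 else z / Ln (1 + z))"

text \<open>z f'(z) / f(z), extended to z = 0 by its limit value 1 (f(0)=0, f'(0)=1).\<close>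
definition starlike_quot :: "(complex \<Rightarrow> complex) \<Rightarrow> complex \<Rightarrow> complex" where
  "starlike_quot f z = (if z = 0 then 1 else z * deriv f z / f z)"

definition SG_star :: "(complex \<Rightarrow> complex) set" where
  "SG_star = {f. class_S f \<and> subordinate (starlike_quot f) Psi}"

text \<open>Logarithmic coefficients: log(f(z)/z) = 2 * sum beta_n z^n, where log(f(z)/z) is
  the analytic branch L on U with L(0)=0; beta_n is half the n-th Taylor coefficient of L.\<close>
definition log_coeff :: "(complex \<Rightarrow> complex) \<Rightarrow> nat \<Rightarrow> complex" where
  "log_coeff f n = (THE b. \<exists>L. L holomorphic_on ball 0 1 \<and> L 0 = 0 \<and>
      (\<forall>z\<in>ball 0 1 - {0}. exp (L z) = f z / z) \<and>
      b = (deriv ^^ n) L 0 / (2 * fact n))"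

end

theory Submission
  imports Defs
begin

text \<open>If \<open>z f'/f = \<Psi> \<circ> w\<close> with \<open>w\<close> a Schwarz function, then \<open>2 n \<beta>\<^sub>n\<close> is the \<open>n\<close>-th Taylor coefficient of
  \<open>\<Psi> \<circ> w\<close>. Writing \<open>w z = z \<phi> z\<close> and running three steps of the Schur algorithm on \<open>\<phi>\<close> expresses
  \<open>4 n \<beta>\<^sub>n\<close> (\<open>n \<le> 4\<close>) as an explicit polynomial in the Schur parameters \<open>g\<^sub>1, \<dots>, g\<^sub>4\<close> of \<open>\<phi>\<close>, which
  range over the closed unit disc, and their conjugates. The triangle inequality reduces
  \<open>\<bar>4 n \<beta>\<^sub>n\<bar> \<le> 1\<close> to real polynomial inequalities on the unit cube; for \<open>n = 4\<close> these are certified by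
  Bernstein expansions with nonnegative coefficients. Equality holds for the function with
  \<open>z f'/f = \<Psi> (z\<^sup>n)\<close>: since \<open>Re \<Psi> > 0\<close> it is starlike, hence univalent.\<close>

lemma has_fps_expansion_cong_ball:
  assumes "f has_fps_expansion F" "\<And>z. z \<in> ball 0 r \<Longrightarrow> f z = g z" "r > 0"
  shows "g has_fps_expansion F"
proof -
  have "eventually (\<lambda>z. f z = g z) (nhds 0)"
    using eventually_nhds_in_open[of "ball 0 r" 0] assms(2,3) by (auto elim: eventually_mono)
  with assms(1) show ?thesis using has_fps_expansion_cong by blast
qed

lemma Re_difference_quotient_pos:
  fixes F F' :: "complex \<Rightarrow> complex"
  assumes "convex S" "open S"
    and der: "\<And>z. z \<in> S \<Longrightarrow> (F has_field_derivative F' z) (at z)"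
    and pos: "\<And>z. z \<in> S \<Longrightarrow> Re (F' z) > 0"
    and ab: "a \<in> S" "b \<in> S" "a \<noteq> b"
  shows "Re ((F b - F a) / (b - a)) > 0"
proof -
  define g where "g t = Re (F (a + of_real t * (b - a)) / (b - a))" for t
  have "g 0 < g 1"
  proof (rule DERIV_pos_imp_increasing[of 0 1 g])
    fix t :: real assume t: "0 \<le> t" "t \<le> 1"
    define z where "z = a + of_real t * (b - a)"
    have "(1 - t) *\<^sub>R a + t *\<^sub>R b \<in> S"
      using convexD_alt[OF \<open>convex S\<close> ab(1,2) t] .
    then have z: "z \<in> S"
      by (simp add: z_def scaleR_conv_of_real algebra_simps)
    have "((\<lambda>t. a + of_real t * (b - a)) has_vector_derivative (b - a)) (at t)"
      by (auto intro!: derivative_eq_intros simp: has_vector_derivative_def scaleR_conv_of_real)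
    moreover have "((\<lambda>u. F u / (b - a)) has_field_derivative F' z / (b - a))
        (at (a + of_real t * (b - a)))"
      using der[OF z] unfolding z_def by (rule DERIV_cdivide)
    ultimately have "((\<lambda>t. F (a + of_real t * (b - a)) / (b - a)) has_vector_derivative F' z) (at t)"
      using field_vector_diff_chain_at ab by (fastforce simp: o_def z_def)
    then have "(g has_real_derivative Re (F' z)) (at t)"
      unfolding g_def by (rule has_field_derivative_Re)
    then show "\<exists>y. (g has_real_derivative y) (at t) \<and> 0 < y"
      using pos[OF z] by blast
  qed simp
  then show ?thesis
    by (simp add: g_def diff_divide_distrib)
qed

lemma Re_inverse_pos: "Re w > 0 \<Longrightarrow> Re (inverse w) > 0"
  using Re_complex_div_gt_0[of 1 w] by (simp add: divide_inverse)

section \<open>The function \<open>\<Psi>\<close>\<close>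

lemma Ln_one_plus_has_fps_expansion: "(\<lambda>z. Ln (1 + z)) has_fps_expansion fps_ln 1"
proof -
  have eval: "eval_fps (fps_ln 1) z = Ln (1 + z)" if "z \<in> ball 0 1" for z :: complex
  proof -
    have "(\<lambda>n. - ((-z) ^ n) / of_nat n) sums Ln (1 + z)"
      using that by (intro Ln_series') auto
    moreover have "- ((-z) ^ n) / of_nat n = fps_ln 1 $ n * z ^ n" for n
      by (cases n) (auto simp: fps_ln_nth power_minus' field_simps)
    ultimately show ?thesis unfolding eval_fps_def by (simp add: sums_iff)
  qed
  have "eval_fps (fps_ln (1::complex)) has_fps_expansion fps_ln 1"
    by (intro eval_fps_has_fps_expansion) (simp add: fps_conv_radius_ln)
  then show ?thesis
    by (rule has_fps_expansion_cong_ball[where r = 1]) (auto simp: eval)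
qed

definition Ln_one_plus_quot :: "complex \<Rightarrow> complex" where
  "Ln_one_plus_quot z = (if z = 0 then 1 else Ln (1 + z) / z)"

lemma Ln_one_plus_quot_has_fps_expansion: "Ln_one_plus_quot has_fps_expansion fps_shift 1 (fps_ln 1)"
proof -
  have "1 \<le> subdegree (fps_ln (1::complex))"
    by (rule subdegree_geI) (auto simp: fps_ln_nth fps_eq_iff)
  from has_fps_expansion_shift[OF Ln_one_plus_has_fps_expansion this refl]
  have "(\<lambda>z. if z = 0 then fps_ln 1 $ 1 else Ln (1 + z) / z ^ 1) has_fps_expansion
    fps_shift 1 (fps_ln 1)" .
  moreover have "(\<lambda>z. if z = 0 then fps_ln 1 $ 1 else Ln (1 + z) / z ^ 1) = Ln_one_plus_quot"
    by (auto simp: Ln_one_plus_quot_def fps_ln_nth fun_eq_iff)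
  ultimately show ?thesis by simp
qed

lemma Psi_eq_inverse_Ln_one_plus_quot: "Psi = (\<lambda>z. inverse (Ln_one_plus_quot z))"
  by (auto simp: fun_eq_iff Psi_def Ln_one_plus_quot_def)

definition Psi_fps :: "complex fps" where
  "Psi_fps = inverse (fps_shift 1 (fps_ln 1))"

lemma Psi_has_fps_expansion: "Psi has_fps_expansion Psi_fps"
  unfolding Psi_eq_inverse_Ln_one_plus_quot Psi_fps_def
  by (rule has_fps_expansion_inverse[OF Ln_one_plus_quot_has_fps_expansion]) (simp add: fps_ln_nth)

lemma Psi_fps_coeffs:
  "Psi_fps $ 0 = 1" "Psi_fps $ 1 = 1/2" "Psi_fps $ 2 = -1/12" "Psi_fps $ 3 = 1/24"
  "Psi_fps $ 4 = -19/720"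
proof -
  define G where "G = fps_shift 1 (fps_ln (1::complex))"
  have G: "G $ n = (-1) ^ n / of_nat (n + 1)" for n
    by (simp add: G_def fps_ln_nth)
  have "Psi_fps * G = 1"
    unfolding Psi_fps_def G_def[symmetric] by (rule inverse_mult_eq_1) (simp add: G)
  then have c: "(Psi_fps * G) $ n = (if n = 0 then 1 else 0)" for n
    by simp
  show c0: "Psi_fps $ 0 = 1"
    using c[of 0] by (simp add: G)
  show c1: "Psi_fps $ 1 = 1/2"
    using c[of 1] c0 by (simp add: G fps_mult_nth numeral_eq_Suc)
  show c2: "Psi_fps $ 2 = -1/12"
    using c[of 2] c0 c1 by (simp add: G fps_mult_nth numeral_eq_Suc) algebra
  show c3: "Psi_fps $ 3 = 1/24"
    using c[of 3] c0 c1 c2 by (simp add: G fps_mult_nth numeral_eq_Suc) algebra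
  show "Psi_fps $ 4 = -19/720"
    using c[of 4] c0 c1 c2 c3 by (simp add: G fps_mult_nth numeral_eq_Suc) algebra
qed

lemma Ln_one_plus_has_field_derivative:
  assumes "z \<in> ball 0 1"
  shows "((\<lambda>z. Ln (1 + z)) has_field_derivative inverse (1 + z)) (at z)"
proof -
  have "\<bar>Re z\<bar> < 1"
    using assms abs_Re_le_cmod[of z] by auto
  then have "1 + z \<notin> \<real>\<^sub>\<le>\<^sub>0"
    by (auto simp: complex_nonpos_Reals_iff)
  then show ?thesis
    by (auto intro!: derivative_eq_intros)
qed

lemma Re_inverse_one_plus_pos: "z \<in> ball 0 1 \<Longrightarrow> Re (inverse (1 + z)) > 0"
  using abs_Re_le_cmod[of z] by (intro Re_inverse_pos) auto

lemma Re_Ln_one_plus_quot_pos: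
  assumes "z \<in> ball 0 1"
  shows "Re (Ln_one_plus_quot z) > 0"
proof (cases "z = 0")
  case False
  have "Re ((Ln (1 + z) - Ln (1 + 0)) / (z - 0)) > 0"
    using assms False Ln_one_plus_has_field_derivative Re_inverse_one_plus_pos
    by (intro Re_difference_quotient_pos[of "ball 0 1" _ "\<lambda>z. inverse (1 + z)"]) auto
  then show ?thesis
    using False by (simp add: Ln_one_plus_quot_def)
qed (simp add: Ln_one_plus_quot_def)

lemma holomorphic_Ln_one_plus_quot: "Ln_one_plus_quot holomorphic_on ball 0 1"
proof -
  have "deriv (\<lambda>z. Ln (1 + z)) 0 = 1"
    using Ln_one_plus_has_field_derivative[of 0] by (auto intro!: DERIV_imp_deriv)
  then have eq: "Ln_one_plus_quot = (\<lambda>z. if z = 0 then deriv (\<lambda>z. Ln (1 + z)) 0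
                            else (Ln (1 + z) - Ln (1 + 0)) / (z - 0))"
    by (auto simp: Ln_one_plus_quot_def fun_eq_iff)
  show ?thesis
    unfolding eq
  proof (rule pole_lemma)
    show "(\<lambda>z. Ln (1 + z)) holomorphic_on ball 0 1"
      unfolding holomorphic_on_open[OF open_ball] using Ln_one_plus_has_field_derivative by blast
  qed auto
qed

lemma holomorphic_Psi: "Psi holomorphic_on ball 0 1"
  using holomorphic_Ln_one_plus_quot Re_Ln_one_plus_quot_pos unfolding Psi_eq_inverse_Ln_one_plus_quot
  by (force intro!: holomorphic_intros)

lemma Re_Psi_pos: "z \<in> ball 0 1 \<Longrightarrow> Re (Psi z) > 0"
  unfolding Psi_eq_inverse_Ln_one_plus_quot by (intro Re_inverse_pos Re_Ln_one_plus_quot_pos)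

section \<open>Logarithmic coefficients\<close>

lemma holomorphic_logs_eq:
  assumes hol: "L1 holomorphic_on ball 0 1" "L2 holomorphic_on ball 0 1" and "L1 0 = L2 0"
    and exp_eq: "\<And>z. z \<in> ball 0 1 - {0} \<Longrightarrow> exp (L1 z) = exp (L2 z)"
    and z: "z \<in> ball 0 1"
  shows "L1 z = L2 z"
proof -
  define D where "D z = L2 z - L1 z" for z
  have hol_D: "D holomorphic_on ball 0 1"
    unfolding D_def[abs_def] using hol by (auto intro!: holomorphic_intros)
  have exp_D: "exp (D z) = 1" if "z \<in> ball 0 1" for z
    using that exp_eq[of z] \<open>L1 0 = L2 0\<close> by (cases "z = 0") (auto simp: D_def exp_diff)
  have "(D has_field_derivative 0) (at z within ball 0 1)" if z: "z \<in> ball 0 1" for z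
  proof -
    have D': "(D has_field_derivative deriv D z) (at z)"
      using hol_D z by (auto intro!: holomorphic_derivI)
    have "((\<lambda>z. exp (D z)) has_field_derivative exp (D z) * deriv D z) (at z)"
      using DERIV_chain2[OF DERIV_exp D'] by simp
    moreover have "((\<lambda>z. exp (D z)) has_field_derivative 0) (at z)"
      by (rule has_field_derivative_transform_within_open[of "\<lambda>_. 1" 0 z "ball 0 1"])
         (use z exp_D in auto)
    ultimately have "deriv D z = 0"
      using DERIV_unique by fastforce
    then show ?thesis
      using D' by (auto intro: has_field_derivative_at_within)
  qed
  then obtain c where "\<forall>z\<in>ball 0 1. D z = c"
    using has_field_derivative_zero_constant[of "ball 0 1" D] by auto
  then have "D z = D 0"
    using z by simp
  then show ?thesis
    using \<open>L1 0 = L2 0\<close> by (simp add: D_def)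
qed

lemma log_coeff_eqI:
  assumes L: "L holomorphic_on ball 0 1" "L 0 = 0" "\<forall>z\<in>ball 0 1 - {0}. exp (L z) = f z / z"
  shows "log_coeff f n = (deriv ^^ n) L 0 / (2 * fact n)"
  unfolding log_coeff_def
proof (rule the_equality)
  fix b
  assume "\<exists>L'. L' holomorphic_on ball 0 1 \<and> L' 0 = 0 \<and>
    (\<forall>z\<in>ball 0 1 - {0}. exp (L' z) = f z / z) \<and> b = (deriv ^^ n) L' 0 / (2 * fact n)"
  then obtain L' where L': "L' holomorphic_on ball 0 1" "L' 0 = 0"
    "\<forall>z\<in>ball 0 1 - {0}. exp (L' z) = f z / z" and b: "b = (deriv ^^ n) L' 0 / (2 * fact n)"
    by blast
  have "eventually (\<lambda>z. L' z = L z) (nhds 0)"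
    using eventually_nhds_in_open[of "ball 0 1" 0] holomorphic_logs_eq[OF L'(1) L(1)] L L'
    by (auto elim!: eventually_mono)
  then have "(deriv ^^ n) L' 0 = (deriv ^^ n) L 0"
    by (rule higher_deriv_cong_ev) simp
  then show "b = (deriv ^^ n) L 0 / (2 * fact n)"
    using b by simp
qed (use L in blast)

lemma class_S_obtains_log:
  assumes "class_S f"
  obtains L where "L holomorphic_on ball 0 1" "L 0 = 0"
    "\<And>z. z \<in> ball 0 1 \<Longrightarrow> f z = z * exp (L z)"
proof -
  have hol: "f holomorphic_on ball 0 1" and inj: "inj_on f (ball 0 1)"
    and "f 0 = 0" "deriv f 0 = 1"
    using assms by (auto simp: class_S_def)
  define q where "q = (\<lambda>z. if z = 0 then deriv f 0 else (f z - f 0) / (z - 0))"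
  have hol_q: "q holomorphic_on ball 0 1"
    unfolding q_def by (rule pole_lemma[OF hol]) auto
  have "q z \<noteq> 0" if "z \<in> ball 0 1" for z
    using inj_onD[OF inj, of z 0] that \<open>f 0 = 0\<close> \<open>deriv f 0 = 1\<close> by (auto simp: q_def)
  then obtain g where hol_g: "g holomorphic_on ball 0 1"
    and q_eq: "\<And>z. z \<in> ball 0 1 \<Longrightarrow> q z = exp (g z)"
    using contractible_imp_holomorphic_log[OF hol_q convex_imp_contractible[OF convex_ball]]
    by blast
  have "exp (g 0) = 1"
    using q_eq[of 0] \<open>deriv f 0 = 1\<close> by (simp add: q_def)
  then have "f z = z * exp (g z - g 0)" if "z \<in> ball 0 1" for z
    using q_eq[OF that] \<open>f 0 = 0\<close> by (cases "z = 0") (auto simp: q_def exp_diff field_simps)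
  moreover have "(\<lambda>z. g z - g 0) holomorphic_on ball 0 1"
    using hol_g by (auto intro!: holomorphic_intros)
  ultimately show ?thesis
    using that[of "\<lambda>z. g z - g 0"] by simp
qed

lemma starlike_quot_exp_form:
  assumes L: "L holomorphic_on ball 0 1" and f: "\<And>z. z \<in> ball 0 1 \<Longrightarrow> f z = z * exp (L z)"
    and z: "z \<in> ball 0 1"
  shows "starlike_quot f z = 1 + z * deriv L z"
proof (cases "z = 0")
  case False
  have "(L has_field_derivative deriv L z) (at z)"
    using L z by (auto intro!: holomorphic_derivI)
  then have "((\<lambda>z. z * exp (L z)) has_field_derivative exp (L z) + z * (exp (L z) * deriv L z)) (at z)"
    by (auto intro!: derivative_eq_intros)
  then have "(f has_field_derivative exp (L z) + z * (exp (L z) * deriv L z)) (at z)"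
    by (rule has_field_derivative_transform_within_open[of _ _ _ "ball 0 1"]) (use z f in auto)
  then show ?thesis
    using False f[OF z] by (simp add: DERIV_imp_deriv starlike_quot_def field_simps)
qed (simp add: starlike_quot_def)

lemma log_coeff_eq_starlike_quot_nth:
  assumes "class_S f" and Q: "starlike_quot f has_fps_expansion Q" and "n \<ge> 1"
  shows "log_coeff f n = Q $ n / (2 * of_nat n)"
proof -
  obtain L where L: "L holomorphic_on ball 0 1" "L 0 = 0"
    and f: "\<And>z. z \<in> ball 0 1 \<Longrightarrow> f z = z * exp (L z)"
    using class_S_obtains_log[OF \<open>class_S f\<close>] by blast
  have L_fps: "L has_fps_expansion fps_expansion L 0"
    using L by (intro has_fps_expansion_fps_expansion[of "ball 0 1"]) auto
  have "(\<lambda>z. 1 + z * deriv L z) has_fps_expansion 1 + fps_X * fps_deriv (fps_expansion L 0)"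
    by (intro fps_expansion_intros L_fps)
  then have "starlike_quot f has_fps_expansion 1 + fps_X * fps_deriv (fps_expansion L 0)"
  proof (rule has_fps_expansion_cong_ball[where r = 1])
    show "1 + z * deriv L z = starlike_quot f z" if "z \<in> ball 0 1" for z
      using starlike_quot_exp_form[OF L(1) f that] by simp
  qed simp
  then have "Q $ n = of_nat n * fps_expansion L 0 $ n"
    using fps_expansion_unique_complex[OF Q] \<open>n \<ge> 1\<close> by (cases n) auto
  also have "\<dots> = of_nat n * ((deriv ^^ n) L 0 / fact n)"
    using fps_nth_fps_expansion[OF L_fps] by simp
  also have "(deriv ^^ n) L 0 = 2 * fact n * log_coeff f n"
    using log_coeff_eqI[OF L, of f n] f by auto
  finally show ?thesis
    using \<open>n \<ge> 1\<close> by (simp add: field_simps)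
qed

section \<open>The Schur algorithm\<close>

definition schur_function :: "(complex \<Rightarrow> complex) \<Rightarrow> bool" where
  "schur_function \<phi> \<longleftrightarrow> \<phi> holomorphic_on ball 0 1 \<and> (\<forall>z\<in>ball 0 1. norm (\<phi> z) \<le> 1)"

lemma schur_function_has_fps_expansion:
  "schur_function \<phi> \<Longrightarrow> \<phi> has_fps_expansion fps_expansion \<phi> 0"
  unfolding schur_function_def by (intro has_fps_expansion_fps_expansion[of "ball 0 1"]) auto

lemma Schwarz_quotient:
  assumes hol: "M holomorphic_on ball 0 1" and "M 0 = 0"
    and lt: "\<And>z. z \<in> ball 0 1 \<Longrightarrow> norm (M z) < 1"
  obtains \<psi> where "schur_function \<psi>" "\<And>z. z \<in> ball 0 1 \<Longrightarrow> M z = z * \<psi> z"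
proof -
  define \<psi> where "\<psi> = (\<lambda>z. if z = 0 then deriv M 0 else (M z - M 0) / (z - 0))"
  have "\<psi> holomorphic_on ball 0 1"
    unfolding \<psi>_def by (rule pole_lemma[OF hol]) auto
  moreover have "norm (\<psi> z) \<le> 1" if "z \<in> ball 0 1" for z
    using Schwarz_Lemma(1,2)[OF hol \<open>M 0 = 0\<close>, of z] lt that
    by (cases "z = 0") (auto simp: \<psi>_def \<open>M 0 = 0\<close> norm_divide divide_le_eq)
  ultimately have "schur_function \<psi>"
    by (simp add: schur_function_def)
  moreover have "M z = z * \<psi> z" if "z \<in> ball 0 1" for z
    by (cases "z = 0") (auto simp: \<psi>_def \<open>M 0 = 0\<close>)
  ultimately show ?thesis
    by (rule that)
qed

lemma schur_function_norm_eq_1_imp_const: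
  assumes "schur_function \<phi>" "z \<in> ball 0 1" "norm (\<phi> z) = 1" "u \<in> ball 0 1"
  shows "\<phi> u = \<phi> z"
proof -
  have "\<phi> constant_on ball 0 1"
    using assms
    by (intro maximum_modulus_principle[where U = "ball 0 1" and \<xi> = z]) (auto simp: schur_function_def)
  then show ?thesis
    using assms(2,4) by (auto simp: constant_on_def)
qed

lemma schur_function_norm_less_1:
  assumes "schur_function \<phi>" "norm (\<phi> 0) < 1" "z \<in> ball 0 1"
  shows "norm (\<phi> z) < 1"
proof (rule ccontr)
  assume "\<not> norm (\<phi> z) < 1"
  moreover have "norm (\<phi> z) \<le> 1"
    using assms(1,3) by (simp add: schur_function_def)
  ultimately have "norm (\<phi> z) = 1"
    by simp
  then have "\<phi> 0 = \<phi> z"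
    using assms by (intro schur_function_norm_eq_1_imp_const) auto
  with \<open>norm (\<phi> z) = 1\<close> assms(2) show False
    by simp
qed

lemma norm_moebius_less_1:
  fixes u g :: complex
  assumes "norm u < 1" "norm g < 1"
  shows "norm ((u - g) / (1 - cnj g * u)) < 1"
proof -
  have "(norm (1 - cnj g * u))\<^sup>2 - (norm (u - g))\<^sup>2 = (1 - (norm u)\<^sup>2) * (1 - (norm g)\<^sup>2)"
    unfolding cmod_power2 by (simp add: power2_eq_square algebra_simps)
  moreover have "0 < (1 - (norm u)\<^sup>2) * (1 - (norm g)\<^sup>2)"
    using assms by (intro mult_pos_pos) (auto simp: power_less_one_iff)
  ultimately have "(norm (u - g))\<^sup>2 < (norm (1 - cnj g * u))\<^sup>2"
    by linarith
  then have lt: "norm (u - g) < norm (1 - cnj g * u)"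
    by (rule power2_less_imp_less) simp
  then have "1 - cnj g * u \<noteq> 0"
    by auto
  with lt show ?thesis
    by (simp add: norm_divide divide_less_eq)
qed

text \<open>One step of the Schur algorithm, \<open>\<phi> = (\<phi> 0 + z \<psi>) / (1 + cnj (\<phi> 0) z \<psi>)\<close>: \<open>\<psi>\<close> is the Schwarz quotient of
  the Moebius transform of \<open>\<phi>\<close> that sends \<open>\<phi> 0\<close> to \<open>0\<close>.\<close>

lemma schur_step:
  assumes "schur_function \<phi>"
  obtains \<psi> where "schur_function \<psi>"
    "\<And>z. z \<in> ball 0 1 \<Longrightarrow> \<phi> z * (1 + cnj (\<phi> 0) * z * \<psi> z) = \<phi> 0 + z * \<psi> z"
proof -
  define g where "g = \<phi> 0"
  have hol: "\<phi> holomorphic_on ball 0 1" and le: "\<And>z. z \<in> ball 0 1 \<Longrightarrow> norm (\<phi> z) \<le> 1"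
    using assms by (auto simp: schur_function_def)
  show ?thesis
  proof (cases "norm g = 1")
    case True
    have "\<phi> z = g" if "z \<in> ball 0 1" for z
      unfolding g_def using True that by (intro schur_function_norm_eq_1_imp_const[OF assms]) (auto simp: g_def)
    then show ?thesis
      using that[of "\<lambda>_. 0"] by (simp add: schur_function_def g_def[symmetric])
  next
    case False
    then have "norm g < 1"
      using le[of 0] by (simp add: g_def)
    have lt: "norm (\<phi> z) < 1" if "z \<in> ball 0 1" for z
      using schur_function_norm_less_1[OF assms] \<open>norm g < 1\<close> that by (simp add: g_def)
    have den: "1 - cnj g * \<phi> z \<noteq> 0" if "z \<in> ball 0 1" for z
    proof -
      have "norm g * norm (\<phi> z) < 1 * 1"
        using lt[OF that] \<open>norm g < 1\<close> by (intro mult_strict_mono') auto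
      then have "norm (cnj g * \<phi> z) < 1"
        by (simp add: norm_mult)
      then show ?thesis
        by auto
    qed
    define M where "M z = (\<phi> z - g) / (1 - cnj g * \<phi> z)" for z
    have "M holomorphic_on ball 0 1"
      unfolding M_def[abs_def] using hol den by (auto intro!: holomorphic_intros)
    moreover have "M 0 = 0"
      by (simp add: M_def g_def)
    moreover have "norm (M z) < 1" if "z \<in> ball 0 1" for z
      unfolding M_def using norm_moebius_less_1[OF lt[OF that] \<open>norm g < 1\<close>] .
    ultimately obtain \<psi> where "schur_function \<psi>" and M: "\<And>z. z \<in> ball 0 1 \<Longrightarrow> M z = z * \<psi> z"
      using Schwarz_quotient by metis
    moreover have "\<phi> z * (1 + cnj g * z * \<psi> z) = g + z * \<psi> z" if "z \<in> ball 0 1" for z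
      using M[OF that] den[OF that] by (simp add: M_def field_simps)
    ultimately show ?thesis
      using that by (simp add: g_def)
  qed
qed

lemma schur_step_fps:
  assumes "schur_function \<phi>" "schur_function \<psi>"
    and "\<And>z. z \<in> ball 0 1 \<Longrightarrow> \<phi> z * (1 + cnj (\<phi> 0) * z * \<psi> z) = \<phi> 0 + z * \<psi> z"
  shows "fps_expansion \<phi> 0 * (1 + fps_const (cnj (\<phi> 0)) * fps_X * fps_expansion \<psi> 0)
           = fps_const (\<phi> 0) + fps_X * fps_expansion \<psi> 0"
proof -
  have "(\<lambda>z. \<phi> z * (1 + cnj (\<phi> 0) * z * \<psi> z)) has_fps_expansion
      fps_expansion \<phi> 0 * (1 + fps_const (cnj (\<phi> 0)) * fps_X * fps_expansion \<psi> 0)"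
    by (intro fps_expansion_intros schur_function_has_fps_expansion assms)
  moreover have "(\<lambda>z. \<phi> z * (1 + cnj (\<phi> 0) * z * \<psi> z)) has_fps_expansion
      fps_const (\<phi> 0) + fps_X * fps_expansion \<psi> 0"
  proof (rule has_fps_expansion_cong_ball[where r = 1])
    show "(\<lambda>z. \<phi> 0 + z * \<psi> z) has_fps_expansion fps_const (\<phi> 0) + fps_X * fps_expansion \<psi> 0"
      by (intro fps_expansion_intros schur_function_has_fps_expansion assms)
  qed (use assms(3) in auto)
  ultimately show ?thesis
    by (rule fps_expansion_unique_complex)
qed

lemma schur_step_fps_nth:
  fixes P Q :: "complex fps"
  assumes "P * (1 + fps_const c * fps_X * Q) = fps_const g + fps_X * Q"
  shows "P $ 0 = g" "P $ (k + 1) = Q $ k - c * (P * Q) $ k"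
proof -
  have eq: "P + fps_X * (fps_const c * (P * Q)) = fps_const g + fps_X * Q"
    using assms by (simp add: algebra_simps)
  show "P $ 0 = g"
    using arg_cong[OF eq, of "\<lambda>F. fps_nth F 0"] by simp
  show "P $ (k + 1) = Q $ k - c * (P * Q) $ k"
    using arg_cong[OF eq, of "\<lambda>F. fps_nth F (k + 1)"] by (simp add: eq_diff_eq)
qed

text \<open>The first Taylor coefficients of a Schur function in terms of its Schur parameters
  \<open>g\<^sub>k = \<phi>\<^sub>k 0\<close>, where \<open>\<phi>\<^sub>1, \<phi>\<^sub>2, \<dots>\<close> are produced by iterating \<open>schur_step\<close>.\<close>

lemma schur_parameter_coeffs:
  fixes P1 P2 P3 P4 :: "complex fps"
  assumes r1: "P1 * (1 + fps_const (cnj g1) * fps_X * P2) = fps_const g1 + fps_X * P2"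
      and r2: "P2 * (1 + fps_const (cnj g2) * fps_X * P3) = fps_const g2 + fps_X * P3"
      and r3: "P3 * (1 + fps_const (cnj g3) * fps_X * P4) = fps_const g3 + fps_X * P4"
      and "P4 $ 0 = g4"
  shows "P1 $ 0 = g1" "P1 $ 1 = (1 - cnj g1 * g1) * g2"
    "P1 $ 2 = (1 - cnj g1 * g1) * ((1 - cnj g2 * g2) * g3 - cnj g1 * g2\<^sup>2)"
    "P1 $ 3 = (1 - cnj g1 * g1) * ((1 - cnj g2 * g2) * ((1 - cnj g3 * g3) * g4
       - cnj g2 * g3\<^sup>2 - 2 * cnj g1 * g2 * g3) + cnj g1 ^ 2 * g2 ^ 3)"
proof -
  note a = schur_step_fps_nth[OF r1] and b = schur_step_fps_nth[OF r2]
    and c = schur_step_fps_nth[OF r3]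
  have mult: "(F * G) $ 1 = F $ 0 * G $ 1 + F $ 1 * G $ 0"
    "(F * G) $ 2 = F $ 0 * G $ 2 + F $ 1 * G $ 1 + F $ 2 * G $ 0" for F G :: "complex fps"
    by (simp_all add: fps_mult_nth numeral_eq_Suc)
  have idx: "0 + 1 = (1::nat)" "1 + 1 = (2::nat)" "2 + 1 = (3::nat)"
    by simp_all
  have c1: "P3 $ 1 = (1 - cnj g3 * g3) * g4"
    using c(2)[of 0] unfolding idx fps_mult_nth_0 c(1) \<open>P4 $ 0 = g4\<close> by (simp add: algebra_simps)
  have b1: "P2 $ 1 = (1 - cnj g2 * g2) * g3"
    using b(2)[of 0] unfolding idx fps_mult_nth_0 b(1) c(1) by (simp add: algebra_simps)
  have b2: "P2 $ 2 = (1 - cnj g2 * g2) * ((1 - cnj g3 * g3) * g4 - cnj g2 * g3\<^sup>2)"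
    using b(2)[of 1] unfolding idx mult b(1) b1 c(1) c1 by (simp add: algebra_simps power2_eq_square)
  have a1: "P1 $ 1 = (1 - cnj g1 * g1) * g2"
    using a(2)[of 0] unfolding idx fps_mult_nth_0 a(1) b(1) by (simp add: algebra_simps)
  have a2: "P1 $ 2 = (1 - cnj g1 * g1) * ((1 - cnj g2 * g2) * g3 - cnj g1 * g2\<^sup>2)"
    using a(2)[of 1] unfolding idx mult a(1) a1 b(1) b1 by (simp add: algebra_simps power2_eq_square)
  show "P1 $ 0 = g1" "P1 $ 1 = (1 - cnj g1 * g1) * g2"
    "P1 $ 2 = (1 - cnj g1 * g1) * ((1 - cnj g2 * g2) * g3 - cnj g1 * g2\<^sup>2)"
    using a(1) a1 a2 by simp_all
  show "P1 $ 3 = (1 - cnj g1 * g1) * ((1 - cnj g2 * g2) * ((1 - cnj g3 * g3) * g4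
       - cnj g2 * g3\<^sup>2 - 2 * cnj g1 * g2 * g3) + cnj g1 ^ 2 * g2 ^ 3)"
    using a(2)[of 2] unfolding idx mult a(1) a1 a2 b(1) b1 b2
    by (simp add: algebra_simps power2_eq_square power3_eq_cube)
qed

lemma schur_function_coeffs:
  assumes "schur_function \<phi>"
  obtains g1 g2 g3 g4 :: complex
  where "norm g1 \<le> 1" "norm g2 \<le> 1" "norm g3 \<le> 1" "norm g4 \<le> 1"
    "fps_expansion \<phi> 0 $ 0 = g1" "fps_expansion \<phi> 0 $ 1 = (1 - cnj g1 * g1) * g2"
    "fps_expansion \<phi> 0 $ 2 = (1 - cnj g1 * g1) * ((1 - cnj g2 * g2) * g3 - cnj g1 * g2\<^sup>2)"
    "fps_expansion \<phi> 0 $ 3 = (1 - cnj g1 * g1) * ((1 - cnj g2 * g2) * ((1 - cnj g3 * g3) * g4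
       - cnj g2 * g3\<^sup>2 - 2 * cnj g1 * g2 * g3) + cnj g1 ^ 2 * g2 ^ 3)"
proof -
  obtain \<phi>2 where s2: "schur_function \<phi>2"
    and e1: "\<And>z. z \<in> ball 0 1 \<Longrightarrow> \<phi> z * (1 + cnj (\<phi> 0) * z * \<phi>2 z) = \<phi> 0 + z * \<phi>2 z"
    using schur_step[OF assms] by blast
  obtain \<phi>3 where s3: "schur_function \<phi>3"
    and e2: "\<And>z. z \<in> ball 0 1 \<Longrightarrow> \<phi>2 z * (1 + cnj (\<phi>2 0) * z * \<phi>3 z) = \<phi>2 0 + z * \<phi>3 z"
    using schur_step[OF s2] by blast
  obtain \<phi>4 where s4: "schur_function \<phi>4"
    and e3: "\<And>z. z \<in> ball 0 1 \<Longrightarrow> \<phi>3 z * (1 + cnj (\<phi>3 0) * z * \<phi>4 z) = \<phi>3 0 + z * \<phi>4 z"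
    using schur_step[OF s3] by blast
  have "fps_expansion \<phi>4 0 $ 0 = \<phi>4 0"
    using fps_nth_fps_expansion[OF schur_function_has_fps_expansion[OF s4], of 0] by simp
  note coeffs = schur_parameter_coeffs[OF schur_step_fps[OF assms s2 e1] schur_step_fps[OF s2 s3 e2]
      schur_step_fps[OF s3 s4 e3] this]
  have norms: "norm (\<phi> 0) \<le> 1" "norm (\<phi>2 0) \<le> 1" "norm (\<phi>3 0) \<le> 1" "norm (\<phi>4 0) \<le> 1"
    using assms s2 s3 s4 by (auto simp: schur_function_def)
  show ?thesis
    by (rule that[OF norms coeffs])
qed

section \<open>Real polynomial inequalities\<close>

lemma mult_minus_square_le: "t * p - t\<^sup>2 \<le> p\<^sup>2 / (4::real)"
proof -
  have "0 \<le> (t - p / 2)\<^sup>2"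
    by simp
  then show ?thesis
    by (simp add: power2_eq_square algebra_simps)
qed

lemma majorant2_le_1:
  fixes a b :: real
  assumes "0 \<le> a" "a \<le> 1" "0 \<le> b" "b \<le> 1"
  shows "(1 - a\<^sup>2) * b + a\<^sup>2 / 6 \<le> 1"
proof -
  have "(1 - a\<^sup>2) * b \<le> 1 - a\<^sup>2"
    using assms by (intro mult_left_le) (auto simp: power_le_one)
  then show ?thesis
    using zero_le_power2[of a] by linarith
qed

lemma majorant3_le_1:
  fixes a b c :: real
  assumes a: "0 \<le> a" "a \<le> 1" and b: "0 \<le> b" "b \<le> 1" and c: "0 \<le> c" "c \<le> 1"
  shows "(1 - a\<^sup>2) * ((1 - b\<^sup>2) * c + a * b\<^sup>2 + a * b / 3) + a ^ 3 / 12 \<le> 1"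
proof -
  have "(1 - b\<^sup>2) * c \<le> 1 - b\<^sup>2"
    using b c by (intro mult_left_le) (auto simp: power_le_one)
  then have "(1 - a\<^sup>2) * ((1 - b\<^sup>2) * c + a * b\<^sup>2 + a * b / 3)
      \<le> (1 - a\<^sup>2) * ((1 - b\<^sup>2) + a * b\<^sup>2 + a * b / 3)"
    using a by (intro mult_left_mono) (auto simp: power_le_one)
  also have "\<dots> = (1 - a\<^sup>2) + (1 + a) * (((1 - a) * b) * (a / 3) - ((1 - a) * b)\<^sup>2)"
    by (simp add: power2_eq_square algebra_simps)
  also have "\<dots> \<le> (1 - a\<^sup>2) + (1 + a) * ((a / 3)\<^sup>2 / 4)"
    using mult_minus_square_le[of "(1 - a) * b" "a / 3"] a by (intro add_left_mono mult_left_mono) auto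
  also have "\<dots> = 1 - a\<^sup>2 * (35/36 - a / 9) - a ^ 3 / 12"
    by (simp add: power2_eq_square power3_eq_cube field_simps)
  also have "\<dots> \<le> 1 - a ^ 3 / 12"
    using a by simp
  finally show ?thesis
    by simp
qed

definition majorant4_small_b :: "real \<Rightarrow> real \<Rightarrow> real" where
  "majorant4_small_b y b = (1 - y) * ((1 - b\<^sup>2) + (1 + b) * y * (2 * b + 1/3)\<^sup>2 / 4)
     + (1 - y)\<^sup>2 * b\<^sup>2 / 6 + (1 - y) * y * (b ^ 3 + b\<^sup>2 / 3 + b / 4) + 19 * y\<^sup>2 / 360"

definition majorant4_large_b :: "real \<Rightarrow> real \<Rightarrow> real" where
  "majorant4_large_b a b = (1 - a\<^sup>2) * (1 - b\<^sup>2) * (1 + a * (2 * b + 1/3)) + (1 - a\<^sup>2)\<^sup>2 * b\<^sup>2 / 6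
     + (1 - a\<^sup>2) * a\<^sup>2 * (b ^ 3 + b\<^sup>2 / 3 + b / 4) + 19 * a ^ 4 / 360"

text \<open>Each certificate \<open>B\<close> below is \<open>1\<close> minus the polynomial, written in the Bernstein basis of the
  unit square; all its coefficients are nonnegative.\<close>

lemma majorant4_small_b_box1:
  fixes u v :: real
  assumes "0 \<le> u" "u \<le> 1" "0 \<le> v" "v \<le> 1"
  shows "majorant4_small_b u (v / 2) \<le> 1"
proof -
  define B where "B = (5/24) * (1-u)^2 * v^2 * (1-v) + (5/24) * (1-u)^2 * v^3
    + (35/36) * u * (1-u) * (1-v)^3 + (47/18) * u * (1-u) * v * (1-v)^2
    + (77/36) * u * (1-u) * v^2 * (1-v) + (1/4) * u * (1-u) * v^3 + (341/360) * u^2 * (1-v)^3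
    + (341/120) * u^2 * v * (1-v)^2 + (341/120) * u^2 * v^2 * (1-v) + (341/360) * u^2 * v^3"
  have "0 \<le> B"
    unfolding B_def using assms by (intro add_nonneg_nonneg mult_nonneg_nonneg zero_le_power) auto
  moreover have "1 - majorant4_small_b u (v / 2) = B"
    unfolding B_def majorant4_small_b_def by (simp add: field_simps power2_eq_square power3_eq_cube power4_eq_xxxx)
  ultimately show ?thesis
    by linarith
qed

lemma majorant4_small_b_box2:
  fixes u v :: real
  assumes "0 \<le> u" "u \<le> 1" "0 \<le> v" "v \<le> 1"
  shows "majorant4_small_b (u / 2) (1/2 + 3/10 * v) \<le> 1"
proof -
  define B where "B = (5/24) * (1-u)^2 * (1-v)^3 + (7/8) * (1-u)^2 * v * (1-v)^2
    + (6/5) * (1-u)^2 * v^2 * (1-v) + (8/15) * (1-u)^2 * v^3 + (1/3) * u * (1-u) * (1-v)^3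
    + (5/6) * u * (1-u) * v * (1-v)^2 + (173/300) * u * (1-u) * v^2 * (1-v)
    + (149/3000) * u * (1-u) * v^3 + (253/720) * u^2 * (1-v)^3 + (109/120) * u^2 * v * (1-v)^2
    + (559/800) * u^2 * v^2 * (1-v) + (4619/36000) * u^2 * v^3"
  have "0 \<le> B"
    unfolding B_def using assms by (intro add_nonneg_nonneg mult_nonneg_nonneg zero_le_power) auto
  moreover have "1 - majorant4_small_b (u / 2) (1/2 + 3/10 * v) = B"
    unfolding B_def majorant4_small_b_def by (simp add: field_simps power2_eq_square power3_eq_cube power4_eq_xxxx)
  ultimately show ?thesis
    by linarith
qed

lemma majorant4_small_b_box3:
  fixes u v :: real
  assumes "0 \<le> u" "u \<le> 1" "0 \<le> v" "v \<le> 1"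
  shows "majorant4_small_b (1/2 + u / 2) (1/2 + 3/10 * v) \<le> 1"
proof -
  define B where "B = (253/720) * (1-u)^2 * (1-v)^3 + (109/120) * (1-u)^2 * v * (1-v)^2
    + (559/800) * (1-u)^2 * v^2 * (1-v) + (4619/36000) * (1-u)^2 * v^3
    + (193/180) * u * (1-u) * (1-v)^3 + (14/5) * u * (1-u) * v * (1-v)^2
    + (1331/600) * u * (1-u) * v^2 * (1-v) + (1043/2250) * u * (1-u) * v^3
    + (341/360) * u^2 * (1-v)^3 + (341/120) * u^2 * v * (1-v)^2 + (341/120) * u^2 * v^2 * (1-v)
    + (341/360) * u^2 * v^3"
  have "0 \<le> B"
    unfolding B_def using assms by (intro add_nonneg_nonneg mult_nonneg_nonneg zero_le_power) auto
  moreover have "1 - majorant4_small_b (1/2 + u / 2) (1/2 + 3/10 * v) = B"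
    unfolding B_def majorant4_small_b_def by (simp add: field_simps power2_eq_square power3_eq_cube power4_eq_xxxx)
  ultimately show ?thesis
    by linarith
qed

lemma majorant4_large_b_box:
  fixes u v :: real
  assumes "0 \<le> u" "u \<le> 1" "0 \<le> v" "v \<le> 1"
  shows "majorant4_large_b u (4/5 + v / 5) \<le> 1"
proof -
  define B where "B = (8/15) * (1-u)^4 * (1-v)^3 + (28/15) * (1-u)^4 * v * (1-v)^2
    + (13/6) * (1-u)^4 * v^2 * (1-v) + (5/6) * (1-u)^4 * v^3 + (539/375) * u * (1-u)^3 * (1-v)^3
    + (439/75) * u * (1-u)^3 * v * (1-v)^2 + (116/15) * u * (1-u)^3 * v^2 * (1-v)
    + (10/3) * u * (1-u)^3 * v^3 + (19/25) * u^2 * (1-u)^2 * (1-v)^3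
    + (91/20) * u^2 * (1-u)^2 * v * (1-v)^2 + (15/2) * u^2 * (1-u)^2 * v^2 * (1-v)
    + (15/4) * u^2 * (1-u)^2 * v^3 + (14/375) * u^3 * (1-u) * (1-v)^3
    + (31/50) * u^3 * (1-u) * v * (1-v)^2 + (7/5) * u^3 * (1-u) * v^2 * (1-v)
    + (5/6) * u^3 * (1-u) * v^3 + (341/360) * u^4 * (1-v)^3 + (341/120) * u^4 * v * (1-v)^2
    + (341/120) * u^4 * v^2 * (1-v) + (341/360) * u^4 * v^3"
  have "0 \<le> B"
    unfolding B_def using assms by (intro add_nonneg_nonneg mult_nonneg_nonneg zero_le_power) auto
  moreover have "1 - majorant4_large_b u (4/5 + v / 5) = B"
    unfolding B_def majorant4_large_b_def by (simp add: field_simps power2_eq_square power3_eq_cube power4_eq_xxxx)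
  ultimately show ?thesis
    by linarith
qed

lemma majorant4_small_b_le_1:
  assumes "0 \<le> y" "y \<le> 1" "0 \<le> b" "b \<le> 4/5"
  shows "majorant4_small_b y b \<le> 1"
proof -
  consider "b \<le> 1/2" | "1/2 \<le> b" "y \<le> 1/2" | "1/2 \<le> b" "1/2 \<le> y"
    by linarith
  then show ?thesis
  proof cases
    case 1
    then show ?thesis
      using majorant4_small_b_box1[of y "2 * b"] assms by simp
  next
    case 2
    have "majorant4_small_b (2 * y / 2) (1/2 + 3/10 * (10/3 * (b - 1/2))) \<le> 1"
      using 2 assms by (intro majorant4_small_b_box2) auto
    moreover have "1/2 + 3/10 * (10/3 * (b - 1/2)) = b"
      by (simp add: field_simps)
    ultimately show ?thesis
      by simp
  next
    case 3
    have "majorant4_small_b (1/2 + (2 * y - 1) / 2) (1/2 + 3/10 * (10/3 * (b - 1/2))) \<le> 1"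
      using 3 assms by (intro majorant4_small_b_box3) auto
    moreover have "1/2 + (2 * y - 1) / 2 = y" "1/2 + 3/10 * (10/3 * (b - 1/2)) = b"
      by (simp_all add: field_simps)
    ultimately show ?thesis
      by simp
  qed
qed

lemma majorant4_large_b_le_1:
  assumes "0 \<le> a" "a \<le> 1" "4/5 \<le> b" "b \<le> 1"
  shows "majorant4_large_b a b \<le> 1"
proof -
  have "majorant4_large_b a (4/5 + (5 * b - 4) / 5) \<le> 1"
    using assms by (intro majorant4_large_b_box) auto
  moreover have "4/5 + (5 * b - 4) / 5 = b"
    by (simp add: field_simps)
  ultimately show ?thesis
    by simp
qed


text \<open>The triangle-inequality majorant of the fourth coefficient, with \<open>a, b, c\<close> the moduli of the first
  three Schur parameters and \<open>p\<close> a bound for \<open>\<bar>2 cnj g\<^sub>1 g\<^sub>2 + g\<^sub>1 / 3\<bar>\<close>.\<close>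

definition majorant4 :: "real \<Rightarrow> real \<Rightarrow> real \<Rightarrow> real \<Rightarrow> real" where
  "majorant4 a b c p = (1 - a\<^sup>2) * ((1 - b\<^sup>2) * ((1 - c\<^sup>2) + b * c\<^sup>2 + c * p)
     + (1 - a\<^sup>2) * b\<^sup>2 / 6 + a\<^sup>2 * b ^ 3 + a\<^sup>2 * b\<^sup>2 / 3 + a\<^sup>2 * b / 4) + 19 * a ^ 4 / 360"

text \<open>For small \<open>b\<close> the optimal choice of \<open>c\<close> (AM-GM) removes \<open>c\<close>; for large \<open>b\<close> the crude bound \<open>c \<le> 1\<close>
  suffices.\<close>

lemma majorant4_le_1:
  fixes a b c p :: real
  assumes a: "0 \<le> a" "a \<le> 1" and b: "0 \<le> b" "b \<le> 1" and c: "0 \<le> c" "c \<le> 1"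
    and p: "0 \<le> p" "p \<le> 2 * a * b + a / 3"
  shows "majorant4 a b c p \<le> 1"
proof (cases "b \<le> 4/5")
  case True
  have "(1 - b\<^sup>2) * ((1 - c\<^sup>2) + b * c\<^sup>2 + c * p)
      = (1 - b\<^sup>2) + (1 + b) * (((1 - b) * c) * p - ((1 - b) * c)\<^sup>2)"
    by (simp add: power2_eq_square algebra_simps)
  also have "\<dots> \<le> (1 - b\<^sup>2) + (1 + b) * (p\<^sup>2 / 4)"
    using mult_minus_square_le[of "(1 - b) * c" p] b by (intro add_left_mono mult_left_mono) auto
  also have "\<dots> \<le> (1 - b\<^sup>2) + (1 + b) * ((a * (2 * b + 1/3))\<^sup>2 / 4)"
    using p b by (intro add_left_mono mult_left_mono divide_right_mono power_mono) (auto simp: algebra_simps)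
  finally have "majorant4 a b c p
      \<le> (1 - a\<^sup>2) * ((1 - b\<^sup>2) + (1 + b) * ((a * (2 * b + 1/3))\<^sup>2 / 4) + (1 - a\<^sup>2) * b\<^sup>2 / 6
         + a\<^sup>2 * b ^ 3 + a\<^sup>2 * b\<^sup>2 / 3 + a\<^sup>2 * b / 4) + 19 * a ^ 4 / 360"
    unfolding majorant4_def using a by (intro add_right_mono mult_left_mono) (auto simp: power_le_one)
  also have "\<dots> = majorant4_small_b (a\<^sup>2) b"
    by (simp add: majorant4_small_b_def power2_eq_square power3_eq_cube power4_eq_xxxx field_simps)
  also have "\<dots> \<le> 1"
    using a b True by (intro majorant4_small_b_le_1) (auto simp: power_le_one)
  finally show ?thesis .
next
  case False
  have "b * c\<^sup>2 \<le> c\<^sup>2" "c * p \<le> p"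
    using b c p by (auto intro: mult_left_le_one_le)
  then have "(1 - c\<^sup>2) + b * c\<^sup>2 + c * p \<le> 1 + a * (2 * b + 1/3)"
    using p by (simp add: algebra_simps)
  then have "majorant4 a b c p
      \<le> (1 - a\<^sup>2) * ((1 - b\<^sup>2) * (1 + a * (2 * b + 1/3)) + (1 - a\<^sup>2) * b\<^sup>2 / 6
         + a\<^sup>2 * b ^ 3 + a\<^sup>2 * b\<^sup>2 / 3 + a\<^sup>2 * b / 4) + 19 * a ^ 4 / 360"
    unfolding majorant4_def using a b by (intro add_right_mono mult_left_mono) (auto simp: power_le_one)
  also have "\<dots> = majorant4_large_b a b"
    by (simp add: majorant4_large_b_def power2_eq_square power3_eq_cube power4_eq_xxxx field_simps)
  also have "\<dots> \<le> 1"
    using a b False by (intro majorant4_large_b_le_1) auto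
  finally show ?thesis .
qed


section \<open>Coefficients of \<open>\<Psi>\<close> composed with a Schwarz function\<close>

text \<open>For \<open>w z = z * \<phi> z\<close> with \<open>\<phi>\<close> a Schur function with Schur parameters \<open>g\<^sub>1, g\<^sub>2, \<dots>\<close>, the value
  \<open>Psi_schur_coeff\<^sub>n\<close> is twice the \<open>n\<close>-th Taylor coefficient of \<open>\<Psi> \<circ> w\<close>.\<close>

definition Psi_schur_coeff2 :: "complex \<Rightarrow> complex \<Rightarrow> complex" where
  "Psi_schur_coeff2 g1 g2 = (1 - cnj g1 * g1) * g2 - g1\<^sup>2 / 6"

definition Psi_schur_coeff3 :: "complex \<Rightarrow> complex \<Rightarrow> complex \<Rightarrow> complex" where
  "Psi_schur_coeff3 g1 g2 g3 =
     (1 - cnj g1 * g1) * ((1 - cnj g2 * g2) * g3 - cnj g1 * g2\<^sup>2 - g1 * g2 / 3) + g1 ^ 3 / 12"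

definition Psi_schur_coeff4 :: "complex \<Rightarrow> complex \<Rightarrow> complex \<Rightarrow> complex \<Rightarrow> complex" where
  "Psi_schur_coeff4 g1 g2 g3 g4 =
     (1 - cnj g1 * g1) * ((1 - cnj g2 * g2) * ((1 - cnj g3 * g3) * g4 - cnj g2 * g3\<^sup>2
        - g3 * (2 * cnj g1 * g2 + g1 / 3))
      - (1 - cnj g1 * g1) * g2\<^sup>2 / 6 + cnj g1 ^ 2 * g2 ^ 3 + g1 * cnj g1 * g2\<^sup>2 / 3 + g1\<^sup>2 * g2 / 4)
     - 19 / 360 * g1 ^ 4"

lemma Psi_fps_compose_X_mult_coeffs:
  fixes P :: "complex fps"
  shows "(Psi_fps oo (fps_X * P)) $ 1 = P $ 0 / 2"
    "(Psi_fps oo (fps_X * P)) $ 2 = P $ 1 / 2 - (P $ 0)\<^sup>2 / 12"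
    "(Psi_fps oo (fps_X * P)) $ 3 = P $ 2 / 2 - P $ 0 * P $ 1 / 6 + (P $ 0) ^ 3 / 24"
    "(Psi_fps oo (fps_X * P)) $ 4 = P $ 3 / 2 - (2 * P $ 0 * P $ 2 + (P $ 1)\<^sup>2) / 12
       + (P $ 0)\<^sup>2 * P $ 1 / 8 - 19 * (P $ 0) ^ 4 / 720"
proof -
  have nth: "(Psi_fps oo (fps_X * P)) $ n
      = (\<Sum>i=0..n. Psi_fps $ i * (if n < i then 0 else (P ^ i) $ (n - i)))" for n
    by (simp add: fps_compose_nth power_mult_distrib fps_X_power_mult_nth)
  have sum_expand: "(\<Sum>i::nat=0..1. f i) = f 0 + f 1"
    "(\<Sum>i::nat=0..2. f i) = f 0 + f 1 + f 2"
    "(\<Sum>i::nat=0..3. f i) = f 0 + f 1 + f 2 + f 3"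
    "(\<Sum>i::nat=0..4. f i) = f 0 + f 1 + f 2 + f 3 + f 4" for f :: "nat \<Rightarrow> complex"
    by (simp_all add: numeral_eq_Suc)
  have sq: "(P ^ 2) $ Suc 0 = 2 * P $ 0 * P $ 1" "(P ^ 2) $ 2 = 2 * P $ 0 * P $ 2 + (P $ 1)\<^sup>2"
    by (simp_all add: power2_eq_square fps_mult_nth sum_expand algebra_simps)
  have cube: "(P ^ 3) $ Suc 0 = 3 * (P $ 0)\<^sup>2 * P $ 1"
    using sq(1) by (simp add: power3_eq_cube power2_eq_square[symmetric] fps_mult_nth fps_nth_power_0
        algebra_simps)
  have Psi_1: "Psi_fps $ Suc 0 = 1/2"
    using Psi_fps_coeffs(2) by simp
  note simps = nth sum_expand sq cube Psi_1 Psi_fps_coeffs fps_nth_power_0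
  show "(Psi_fps oo (fps_X * P)) $ 1 = P $ 0 / 2"
    "(Psi_fps oo (fps_X * P)) $ 2 = P $ 1 / 2 - (P $ 0)\<^sup>2 / 12"
    "(Psi_fps oo (fps_X * P)) $ 3 = P $ 2 / 2 - P $ 0 * P $ 1 / 6 + (P $ 0) ^ 3 / 24"
    "(Psi_fps oo (fps_X * P)) $ 4 = P $ 3 / 2 - (2 * P $ 0 * P $ 2 + (P $ 1)\<^sup>2) / 12
       + (P $ 0)\<^sup>2 * P $ 1 / 8 - 19 * (P $ 0) ^ 4 / 720"
    by (simp_all add: simps)
qed

lemma Psi_fps_compose_schur_coeffs:
  fixes P :: "complex fps"
  assumes "P $ 0 = g1" "P $ 1 = (1 - cnj g1 * g1) * g2"
    "P $ 2 = (1 - cnj g1 * g1) * ((1 - cnj g2 * g2) * g3 - cnj g1 * g2\<^sup>2)"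
    "P $ 3 = (1 - cnj g1 * g1) * ((1 - cnj g2 * g2) * ((1 - cnj g3 * g3) * g4
       - cnj g2 * g3\<^sup>2 - 2 * cnj g1 * g2 * g3) + cnj g1 ^ 2 * g2 ^ 3)"
  shows "2 * (Psi_fps oo (fps_X * P)) $ 1 = g1"
    "2 * (Psi_fps oo (fps_X * P)) $ 2 = Psi_schur_coeff2 g1 g2"
    "2 * (Psi_fps oo (fps_X * P)) $ 3 = Psi_schur_coeff3 g1 g2 g3"
    "2 * (Psi_fps oo (fps_X * P)) $ 4 = Psi_schur_coeff4 g1 g2 g3 g4"
  unfolding Psi_fps_compose_X_mult_coeffs assms
    Psi_schur_coeff2_def Psi_schur_coeff3_def Psi_schur_coeff4_def
  by (simp_all add: field_simps power2_eq_square power3_eq_cube power4_eq_xxxx)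

lemma norm_one_minus_cnj_mult_self:
  assumes "norm g \<le> 1"
  shows "norm (1 - cnj g * g) = 1 - (norm g)\<^sup>2"
proof -
  have "1 - cnj g * g = complex_of_real (1 - (norm g)\<^sup>2)"
    using complex_norm_square[of g] by (simp add: mult.commute)
  moreover have "norm (complex_of_real (1 - (norm g)\<^sup>2)) = 1 - (norm g)\<^sup>2"
    using assms by (simp only: norm_of_real) (simp add: abs_of_nonneg power_le_one)
  ultimately show ?thesis
    by (simp only:)
qed

lemma norm_Psi_schur_coeff2_le_1:
  assumes "norm g1 \<le> 1" "norm g2 \<le> 1"
  shows "norm (Psi_schur_coeff2 g1 g2) \<le> 1"
proof -
  have "norm (Psi_schur_coeff2 g1 g2) \<le> norm ((1 - cnj g1 * g1) * g2) + norm (g1\<^sup>2 / 6)"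
    unfolding Psi_schur_coeff2_def by (rule norm_triangle_ineq4)
  also have "\<dots> = (1 - (norm g1)\<^sup>2) * norm g2 + (norm g1)\<^sup>2 / 6"
    using assms by (simp add: norm_mult norm_one_minus_cnj_mult_self norm_divide norm_power)
  also have "\<dots> \<le> 1"
    using assms by (intro majorant2_le_1) auto
  finally show ?thesis .
qed

lemma norm_Psi_schur_coeff3_le_1:
  assumes "norm g1 \<le> 1" "norm g2 \<le> 1" "norm g3 \<le> 1"
  shows "norm (Psi_schur_coeff3 g1 g2 g3) \<le> 1"
proof -
  define a b c where "a = norm g1" "b = norm g2" "c = norm g3"
  define I where "I = (1 - cnj g2 * g2) * g3 - cnj g1 * g2\<^sup>2 - g1 * g2 / 3"
  have "norm I \<le> norm ((1 - cnj g2 * g2) * g3) + norm (cnj g1 * g2\<^sup>2) + norm (g1 * g2 / 3)"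
    unfolding I_def by (rule order_trans[OF norm_triangle_ineq4 add_right_mono[OF norm_triangle_ineq4]])
  also have "\<dots> = (1 - b\<^sup>2) * c + a * b\<^sup>2 + a * b / 3"
    using assms by (simp add: a_b_c_def norm_one_minus_cnj_mult_self norm_mult norm_divide norm_power)
  finally have I: "norm I \<le> (1 - b\<^sup>2) * c + a * b\<^sup>2 + a * b / 3" .
  have "norm (Psi_schur_coeff3 g1 g2 g3) \<le> norm ((1 - cnj g1 * g1) * I) + norm (g1 ^ 3 / 12)"
    unfolding Psi_schur_coeff3_def I_def by (rule norm_triangle_ineq)
  also have "\<dots> = (1 - a\<^sup>2) * norm I + a ^ 3 / 12"
    using assms by (simp add: a_b_c_def norm_mult norm_one_minus_cnj_mult_self norm_divide norm_power)
  also have "\<dots> \<le> (1 - a\<^sup>2) * ((1 - b\<^sup>2) * c + a * b\<^sup>2 + a * b / 3) + a ^ 3 / 12"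
    using I assms by (intro add_right_mono mult_left_mono) (auto simp: a_b_c_def power_le_one)
  also have "\<dots> \<le> 1"
    using assms by (intro majorant3_le_1) (auto simp: a_b_c_def)
  finally show ?thesis .
qed

lemma norm_Psi_schur_coeff4_le_majorant4:
  assumes "norm g1 \<le> 1" "norm g2 \<le> 1" "norm g3 \<le> 1" "norm g4 \<le> 1"
  shows "norm (Psi_schur_coeff4 g1 g2 g3 g4)
    \<le> majorant4 (norm g1) (norm g2) (norm g3) (norm (2 * cnj g1 * g2 + g1 / 3))"
proof -
  define a b c p where "a = norm g1" "b = norm g2" "c = norm g3"
    "p = norm (2 * cnj g1 * g2 + g1 / 3)"
  define I3 where "I3 = (1 - cnj g3 * g3) * g4 - cnj g2 * g3\<^sup>2 - g3 * (2 * cnj g1 * g2 + g1 / 3)"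
  define I2 where "I2 = (1 - cnj g2 * g2) * I3 - (1 - cnj g1 * g1) * g2\<^sup>2 / 6 + cnj g1 ^ 2 * g2 ^ 3
    + g1 * cnj g1 * g2\<^sup>2 / 3 + g1\<^sup>2 * g2 / 4"
  have "norm I3 \<le> norm ((1 - cnj g3 * g3) * g4) + norm (cnj g2 * g3\<^sup>2)
      + norm (g3 * (2 * cnj g1 * g2 + g1 / 3))"
    unfolding I3_def by (rule order_trans[OF norm_triangle_ineq4 add_right_mono[OF norm_triangle_ineq4]])
  also have "\<dots> \<le> (1 - c\<^sup>2) + b * c\<^sup>2 + c * p"
    using assms mult_left_le[of "norm g4" "1 - c\<^sup>2"]
    by (simp add: a_b_c_p_def norm_one_minus_cnj_mult_self norm_mult norm_power power_le_one)
  finally have I3: "norm I3 \<le> (1 - c\<^sup>2) + b * c\<^sup>2 + c * p" .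
  have "norm I2 \<le> norm ((1 - cnj g2 * g2) * I3) + norm ((1 - cnj g1 * g1) * g2\<^sup>2 / 6)
      + norm (cnj g1 ^ 2 * g2 ^ 3) + norm (g1 * cnj g1 * g2\<^sup>2 / 3) + norm (g1\<^sup>2 * g2 / 4)"
    unfolding I2_def
    by (rule order_trans[OF norm_triangle_ineq add_right_mono[OF order_trans[OF norm_triangle_ineq
          add_right_mono[OF order_trans[OF norm_triangle_ineq add_right_mono[OF norm_triangle_ineq4]]]]]])
  also have "\<dots> = (1 - b\<^sup>2) * norm I3 + (1 - a\<^sup>2) * b\<^sup>2 / 6 + a\<^sup>2 * b ^ 3 + a\<^sup>2 * b\<^sup>2 / 3 + a\<^sup>2 * b / 4"
    using assms by (simp add: a_b_c_p_def norm_one_minus_cnj_mult_self norm_mult norm_divide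
        norm_power power2_eq_square)
  also have "\<dots> \<le> (1 - b\<^sup>2) * ((1 - c\<^sup>2) + b * c\<^sup>2 + c * p)
      + (1 - a\<^sup>2) * b\<^sup>2 / 6 + a\<^sup>2 * b ^ 3 + a\<^sup>2 * b\<^sup>2 / 3 + a\<^sup>2 * b / 4"
    using I3 assms by (intro add_right_mono mult_left_mono) (auto simp: a_b_c_p_def power_le_one)
  finally have I2: "norm I2 \<le> \<dots>" .
  have "norm (Psi_schur_coeff4 g1 g2 g3 g4) \<le> norm ((1 - cnj g1 * g1) * I2) + norm (19 / 360 * g1 ^ 4)"
    unfolding Psi_schur_coeff4_def I2_def I3_def by (rule norm_triangle_ineq4)
  also have "\<dots> = (1 - a\<^sup>2) * norm I2 + 19 * a ^ 4 / 360"
    using assms by (simp add: a_b_c_p_def norm_one_minus_cnj_mult_self norm_mult norm_power)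
  also have "\<dots> \<le> majorant4 a b c p"
    unfolding majorant4_def using I2 assms
    by (intro add_right_mono mult_left_mono) (auto simp: a_b_c_p_def power_le_one)
  finally show ?thesis
    by (simp add: a_b_c_p_def)
qed

lemma norm_Psi_schur_coeff4_le_1:
  assumes "norm g1 \<le> 1" "norm g2 \<le> 1" "norm g3 \<le> 1" "norm g4 \<le> 1"
  shows "norm (Psi_schur_coeff4 g1 g2 g3 g4) \<le> 1"
proof -
  have "norm (2 * cnj g1 * g2 + g1 / 3) \<le> 2 * norm g1 * norm g2 + norm g1 / 3"
    using norm_triangle_ineq[of "2 * cnj g1 * g2" "g1 / 3"] by (simp add: norm_mult norm_divide)
  then have "majorant4 (norm g1) (norm g2) (norm g3) (norm (2 * cnj g1 * g2 + g1 / 3)) \<le> 1"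
    using assms by (intro majorant4_le_1) auto
  then show ?thesis
    using norm_Psi_schur_coeff4_le_majorant4[OF assms] by linarith
qed

section \<open>The upper bound\<close>

lemma SG_star_obtains_schur_function:
  assumes "f \<in> SG_star"
  obtains \<phi> where "schur_function \<phi>"
    "starlike_quot f has_fps_expansion (Psi_fps oo (fps_X * fps_expansion \<phi> 0))"
proof -
  obtain w where hol: "w holomorphic_on ball 0 1" and "w 0 = 0"
    and w: "\<And>z. z \<in> ball 0 1 \<Longrightarrow> norm (w z) < 1 \<and> starlike_quot f z = Psi (w z)"
    using assms unfolding SG_star_def subordinate_def by blast
  obtain \<phi> where \<phi>: "schur_function \<phi>" and w_eq: "\<And>z. z \<in> ball 0 1 \<Longrightarrow> w z = z * \<phi> z"
    using Schwarz_quotient[OF hol \<open>w 0 = 0\<close>] w by blast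
  have "(\<lambda>z. z * \<phi> z) has_fps_expansion fps_X * fps_expansion \<phi> 0"
    by (intro fps_expansion_intros schur_function_has_fps_expansion \<phi>)
  then have "(Psi \<circ> (\<lambda>z. z * \<phi> z)) has_fps_expansion (Psi_fps oo (fps_X * fps_expansion \<phi> 0))"
    by (rule has_fps_expansion_compose[OF Psi_has_fps_expansion]) simp
  then have "starlike_quot f has_fps_expansion (Psi_fps oo (fps_X * fps_expansion \<phi> 0))"
    by (rule has_fps_expansion_cong_ball[where r = 1]) (auto simp: w w_eq)
  with \<phi> show ?thesis
    using that by blast
qed

lemma norm_Psi_fps_compose_schur_nth_le_1:
  assumes "schur_function \<phi>" "n \<in> {1..4}"
  shows "norm (2 * (Psi_fps oo (fps_X * fps_expansion \<phi> 0)) $ n) \<le> 1"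
proof -
  obtain g1 g2 g3 g4 where g: "norm g1 \<le> 1" "norm g2 \<le> 1" "norm g3 \<le> 1" "norm g4 \<le> 1"
    and coeffs: "2 * (Psi_fps oo (fps_X * fps_expansion \<phi> 0)) $ 1 = g1"
      "2 * (Psi_fps oo (fps_X * fps_expansion \<phi> 0)) $ 2 = Psi_schur_coeff2 g1 g2"
      "2 * (Psi_fps oo (fps_X * fps_expansion \<phi> 0)) $ 3 = Psi_schur_coeff3 g1 g2 g3"
      "2 * (Psi_fps oo (fps_X * fps_expansion \<phi> 0)) $ 4 = Psi_schur_coeff4 g1 g2 g3 g4"
    using schur_function_coeffs[OF assms(1)] Psi_fps_compose_schur_coeffs by metis
  consider "n = 1" | "n = 2" | "n = 3" | "n = 4"
    using assms(2) by force
  then show ?thesis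
  proof cases
    case 1
    show ?thesis
      unfolding 1 coeffs(1) by (rule g(1))
  next
    case 2
    show ?thesis
      unfolding 2 coeffs(2) by (intro norm_Psi_schur_coeff2_le_1 g)
  next
    case 3
    show ?thesis
      unfolding 3 coeffs(3) by (intro norm_Psi_schur_coeff3_le_1 g)
  next
    case 4
    show ?thesis
      unfolding 4 coeffs(4) by (intro norm_Psi_schur_coeff4_le_1 g)
  qed
qed

lemma norm_log_coeff_SG_star_le:
  assumes "f \<in> SG_star" "n \<in> {1..4}"
  shows "norm (log_coeff f n) \<le> 1 / (4 * real n)"
proof -
  obtain \<phi> where \<phi>: "schur_function \<phi>"
    and Q: "starlike_quot f has_fps_expansion (Psi_fps oo (fps_X * fps_expansion \<phi> 0))"
    using SG_star_obtains_schur_function[OF assms(1)] by blast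
  define c where "c = 2 * (Psi_fps oo (fps_X * fps_expansion \<phi> 0)) $ n"
  have "class_S f"
    using assms(1) by (simp add: SG_star_def)
  then have "log_coeff f n = c / (4 * of_nat n)"
    using log_coeff_eq_starlike_quot_nth[OF _ Q] assms(2) by (simp add: c_def)
  moreover have "norm c \<le> 1"
    unfolding c_def by (rule norm_Psi_fps_compose_schur_nth_le_1[OF \<phi> assms(2)])
  ultimately show ?thesis
    using assms(2) by (simp add: norm_divide divide_right_mono)
qed

section \<open>The extremal functions\<close>

lemma holomorphic_obtains_log_with_starlike_quot:
  assumes hol: "Q holomorphic_on ball 0 1" and "Q 0 = 1"
  obtains L where "L holomorphic_on ball 0 1" "L 0 = 0"
    "\<And>z. z \<in> ball 0 1 \<Longrightarrow> 1 + z * deriv L z = Q z"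
proof -
  define H where "H = (\<lambda>z. if z = 0 then deriv Q 0 else (Q z - Q 0) / (z - 0))"
  have "H holomorphic_on ball 0 1"
    unfolding H_def by (rule pole_lemma[OF hol]) auto
  then obtain g where g: "\<And>z. z \<in> ball 0 1 \<Longrightarrow> (g has_field_derivative H z) (at z)"
    using holomorphic_convex_primitive'[OF convex_ball open_ball] at_within_open[OF _ open_ball]
    by metis
  define L where "L z = g z - g 0" for z
  have L': "(L has_field_derivative H z) (at z)" if "z \<in> ball 0 1" for z
    unfolding L_def[abs_def] using g[OF that] by (auto intro!: derivative_eq_intros)
  then have "L holomorphic_on ball 0 1"
    using holomorphic_on_open[OF open_ball] by blast
  moreover have "1 + z * deriv L z = Q z" if "z \<in> ball 0 1" for z
    using DERIV_imp_deriv[OF L'[OF that]] \<open>Q 0 = 1\<close> by (auto simp: H_def)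
  ultimately show ?thesis
    using that by (simp add: L_def)
qed

text \<open>Starlike functions are univalent: in the logarithmic coordinate \<open>z = exp \<zeta>\<close> the function
  \<open>\<zeta> + L (exp \<zeta>)\<close> has derivative \<open>z f'(z) / f(z)\<close>, which has positive real part, so it is injective on
  the convex half-plane \<open>Re \<zeta> < 0\<close>.\<close>

lemma inj_on_log_coordinate:
  assumes hol: "L holomorphic_on ball 0 1"
    and pos: "\<And>z. z \<in> ball 0 1 \<Longrightarrow> Re (1 + z * deriv L z) > 0"
  shows "inj_on (\<lambda>\<zeta>. \<zeta> + L (exp \<zeta>)) {\<zeta>. Re \<zeta> < 0}"
proof (rule inj_onI, rule ccontr)
  define F where "F \<zeta> = \<zeta> + L (exp \<zeta>)" for \<zeta>
  have F': "(F has_field_derivative 1 + exp \<zeta> * deriv L (exp \<zeta>)) (at \<zeta>)" if "Re \<zeta> < 0" for \<zeta>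
  proof -
    have "(L has_field_derivative deriv L (exp \<zeta>)) (at (exp \<zeta>))"
      using hol that by (auto intro: holomorphic_derivI)
    from DERIV_add[OF DERIV_ident DERIV_chain2[OF this DERIV_exp]]
    show ?thesis
      by (simp add: F_def[abs_def] mult.commute)
  qed
  fix \<zeta>1 \<zeta>2
  assume \<zeta>: "\<zeta>1 \<in> {\<zeta>. Re \<zeta> < 0}" "\<zeta>2 \<in> {\<zeta>. Re \<zeta> < 0}" "\<zeta>1 + L (exp \<zeta>1) = \<zeta>2 + L (exp \<zeta>2)"
    and "\<zeta>1 \<noteq> \<zeta>2"
  then have "Re ((F \<zeta>2 - F \<zeta>1) / (\<zeta>2 - \<zeta>1)) > 0"
    using F' pos
    by (intro Re_difference_quotient_pos[of "{\<zeta>. Re \<zeta> < 0}" F "\<lambda>\<zeta>. 1 + exp \<zeta> * deriv L (exp \<zeta>)"])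
       (auto simp: convex_halfspace_Re_lt open_halfspace_Re_lt)
  then show False
    using \<zeta> by (simp add: F_def)
qed

lemma inj_on_exp_form:
  assumes hol: "L holomorphic_on ball 0 1"
    and pos: "\<And>z. z \<in> ball 0 1 \<Longrightarrow> Re (1 + z * deriv L z) > 0"
  shows "inj_on (\<lambda>z. z * exp (L z)) (ball 0 1)"
proof (rule inj_onI)
  fix z1 z2
  assume z: "z1 \<in> ball 0 1" "z2 \<in> ball 0 1" and eq: "z1 * exp (L z1) = z2 * exp (L z2)"
  show "z1 = z2"
  proof (cases "z1 = 0 \<or> z2 = 0")
    case False
    define F where "F \<zeta> = \<zeta> + L (exp \<zeta>)" for \<zeta>
    have "exp (F (Ln z1)) = exp (F (Ln z2))"
      using False eq by (simp add: F_def exp_add)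
    then obtain k :: int where k: "F (Ln z1) = F (Ln z2) + of_int (2 * k) * pi * \<i>"
      using exp_eq by blast
    define \<zeta> where "\<zeta> = Ln z2 + of_int (2 * k) * pi * \<i>"
    have "exp \<zeta> = exp (Ln z2)"
      unfolding exp_eq \<zeta>_def by blast
    then have "exp \<zeta> = z2"
      using False by simp
    moreover have "F \<zeta> = F (Ln z1)"
      using k \<open>exp \<zeta> = z2\<close> False by (simp add: F_def \<zeta>_def algebra_simps)
    moreover have "Re \<zeta> < 0" "Re (Ln z1) < 0"
      using False z by (auto simp: \<zeta>_def ln_less_zero)
    ultimately have "\<zeta> = Ln z1"
      using inj_on_log_coordinate[OF hol pos] by (auto simp: F_def inj_on_def)
    then show ?thesis
      using \<open>exp \<zeta> = z2\<close> False by auto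
  qed (use eq in auto)
qed

lemma class_S_exp_form:
  assumes hol: "L holomorphic_on ball 0 1" and "L 0 = 0"
    and pos: "\<And>z. z \<in> ball 0 1 \<Longrightarrow> Re (1 + z * deriv L z) > 0"
  shows "class_S (\<lambda>z. z * exp (L z))"
proof -
  have "((\<lambda>z. z * exp (L z)) has_field_derivative exp (L 0)) (at 0)"
    using hol by (auto intro!: derivative_eq_intros holomorphic_derivI)
  then show ?thesis
    using hol inj_on_exp_form[OF hol pos] \<open>L 0 = 0\<close>
    by (auto simp: class_S_def DERIV_imp_deriv intro!: holomorphic_intros)
qed

lemma fps_compose_X_power_nth_self:
  fixes F :: "'a::field fps"
  assumes "n \<ge> 1"
  shows "(F oo fps_X ^ n) $ n = F $ 1"
proof -
  have "(F oo fps_X ^ n) $ n = (\<Sum>i=0..n. F $ i * (if n = n * i then 1 else 0))"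
    by (simp add: fps_compose_nth power_mult[symmetric])
  also have "\<dots> = (\<Sum>i=0..n. if i = 1 then F $ i else 0)"
    using assms by (intro sum.cong refl) auto
  also have "\<dots> = F $ 1"
    using assms by simp
  finally show ?thesis .
qed

lemma SG_star_obtains_extremal:
  assumes "n \<ge> 1"
  obtains f where "f \<in> SG_star" "log_coeff f n = 1 / (4 * of_nat n)"
proof -
  have pow: "z ^ n \<in> ball 0 1" if "z \<in> ball 0 1" for z :: complex
    using that assms by (simp add: norm_power power_less_one_iff)
  define Q where "Q z = Psi (z ^ n)" for z
  have "(Psi \<circ> (\<lambda>z. z ^ n)) holomorphic_on ball 0 1"
    using pow by (intro holomorphic_on_compose_gen[OF _ holomorphic_Psi]) (auto intro!: holomorphic_intros)
  then have "Q holomorphic_on ball 0 1"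
    by (simp add: Q_def[abs_def] o_def)
  moreover have "Q 0 = 1"
    using assms by (simp add: Q_def Psi_def)
  ultimately obtain L where L: "L holomorphic_on ball 0 1" "L 0 = 0"
    and L_quot: "\<And>z. z \<in> ball 0 1 \<Longrightarrow> 1 + z * deriv L z = Q z"
    using holomorphic_obtains_log_with_starlike_quot by metis
  define f where "f z = z * exp (L z)" for z
  have quot: "starlike_quot f z = Psi (z ^ n)" if "z \<in> ball 0 1" for z
    using starlike_quot_exp_form[OF L(1) _ that, of f] L_quot[OF that] by (simp add: f_def Q_def)
  have "class_S f"
    unfolding f_def using L_quot Re_Psi_pos pow by (intro class_S_exp_form L) (simp add: Q_def)
  moreover have "subordinate (starlike_quot f) Psi"
    unfolding subordinate_def using quot pow assms
    by (intro exI[of _ "\<lambda>z. z ^ n"]) (auto intro!: holomorphic_intros)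
  moreover have "starlike_quot f has_fps_expansion (Psi_fps oo fps_X ^ n)"
  proof (rule has_fps_expansion_cong_ball[where r = 1])
    show "(Psi \<circ> (\<lambda>z. z ^ n)) has_fps_expansion (Psi_fps oo fps_X ^ n)"
      using assms by (intro has_fps_expansion_compose Psi_has_fps_expansion fps_expansion_intros) auto
  qed (use quot in auto)
  from log_coeff_eq_starlike_quot_nth[OF \<open>class_S f\<close> this assms]
  have "log_coeff f n = Psi_fps $ 1 / (2 * of_nat n)"
    unfolding fps_compose_X_power_nth_self[OF assms] .
  then have "log_coeff f n = 1 / (4 * of_nat n)"
    unfolding Psi_fps_coeffs(2) by simp
  ultimately show ?thesis
    using that by (simp add: SG_star_def)
qed

theorem theorem3:
  shows "(\<forall>f\<in>SG_star. \<forall>n\<in>{1..4::nat}. norm (log_coeff f n) \<le> 1 / (4 * real n)) \<and>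
         (\<forall>n\<in>{1..4::nat}. \<exists>f\<in>SG_star. norm (log_coeff f n) = 1 / (4 * real n))"
proof
  show "\<forall>f\<in>SG_star. \<forall>n\<in>{1..4::nat}. norm (log_coeff f n) \<le> 1 / (4 * real n)"
    using norm_log_coeff_SG_star_le by blast
  show "\<forall>n\<in>{1..4::nat}. \<exists>f\<in>SG_star. norm (log_coeff f n) = 1 / (4 * real n)"
  proof
    fix n :: nat
    assume "n \<in> {1..4}"
    then obtain f where "f \<in> SG_star" and "log_coeff f n = 1 / (4 * of_nat n)"
      using SG_star_obtains_extremal by auto
    then have "norm (log_coeff f n) = 1 / (4 * real n)"
      by (simp add: norm_divide)
    with \<open>f \<in> SG_star\<close> show "\<exists>f\<in>SG_star. norm (log_coeff f n) = 1 / (4 * real n)"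
      by blast
  qed
qed

end
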